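(* Let $b(n)$ be the number of non-squashing partitions of $n$ into distinct parts. Then $b(0)=b(1)=1$, and for $m\ge1$, $b(2m)=b(2m-1)+b(m)-1$ and $b(2m+1)=b(2m)+1$. The generating function $B(x)=\sum_{n\ge0} b(n)x^n$ satisfies $$B(x)=\frac{1}{1-x}B(x^2)-\frac{x^2}{1-x^2},$$ and explicitly $$B(x)=1+\frac{x}{1-x}+\sum_{i=1}^{\infty}\frac{x^{3\cdot 2^{i-1}}}{\prod_{j=0}^{i}\left(1-x^{2^j}\right)}.$$
   Context: A partition $n=p_1+\cdots+p_k$ with $1\le p_1\le\cdots\le p_k$ is non-squashing if $p_1+\cdots+p_j\le p_{j+1}$ for all $1\le j\le k-1$. The empty partition of $0$ counts as a non-squashing partition into distinct parts. *)

theory Defs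
  imports "HOL-Computational_Algebra.Formal_Power_Series"
begin

text \<open>It is non-squashing if p_1 + ... + p_j \<le> p_(j+1) for 1 \<le> j \<le> k-1
  (0-based: sum of the first j entries \<le> entry j, for 1 \<le> j < k).\<close>

definition nonsquashing_distinct :: "nat \<Rightarrow> nat list \<Rightarrow> bool" where
  "nonsquashing_distinct n ps \<longleftrightarrow>
     (\<forall>p\<in>set ps. 1 \<le> p) \<and> sorted ps \<and> distinct ps \<and> sum_list ps = n \<and>
     (\<forall>j. 1 \<le> j \<and> j < length ps \<longrightarrow> sum_list (take j ps) \<le> ps ! j)"

definition b :: "nat \<Rightarrow> nat" where
  "b n = card {ps. nonsquashing_distinct n ps}"

definition B :: "real fps" where
  "B = Abs_fps (\<lambda>n. real (b n))"

end

theory Submission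
  imports Defs
begin

text \<open>
  Removing the largest part \<open>p\<close> of a non-squashing partition of \<open>n \<ge> 1\<close> into distinct parts
  leaves one of \<open>s = n - p\<close>, and the non-squashing condition at the last part says \<open>s \<le> p\<close>,
  i.e. \<open>s \<le> n/2\<close>.  Conversely every such partition of \<open>s \<le> n/2\<close> extends by the part \<open>n - s\<close>,
  except \<open>[n/2]\<close> for even \<open>n\<close>, which would repeat a part.  Hence
  \<open>b(n) = b(0) + \<dots> + b(\<lfloor>n/2\<rfloor>) - [n even]\<close>, which gives the recurrences and, read on
  coefficients, the functional equation.
  The series \<open>D = B - 1 - x/(1-x)\<close> (\<open>B_multipart\<close>) counts the partitions with at least two
  parts, \<open>1 + x/(1-x)\<close> accounting for the empty and the one-part partitions, and satisfies
  \<open>D(x) = x^3/((1-x)(1-x^2)) + D(x^2)/(1-x)\<close>.  Iterating \<open>N\<close> times leaves the remainder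
  \<open>D(x^(2^N)) / \<Prod>j<N. (1 - x^(2^j))\<close>, whose coefficients vanish below degree \<open>2^N\<close> because
  \<open>D(0) = 0\<close>; so the partial sums converge to \<open>D\<close> in the \<open>x\<close>-adic topology.
\<close>

unbundle fps_syntax

lemma length_le_sum_list_pos:
  "\<forall>x\<in>set xs. (1::nat) \<le> x \<Longrightarrow> length xs \<le> sum_list xs"
  by (induction xs) auto

lemma sum_list_le_member_imp_singleton:
  assumes "\<forall>x\<in>set xs. (1::nat) \<le> x" "p \<in> set xs" "sum_list xs \<le> p"
  shows "xs = [p]"
proof -
  have "sum_list xs = p + sum_list (remove1 p xs)"
    using assms(2) sum_list_map_remove1[of p xs "\<lambda>x. x"] by simp
  moreover have "length (remove1 p xs) \<le> sum_list (remove1 p xs)"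
    using assms(1) by (intro length_le_sum_list_pos) (auto dest: set_remove1_subset[THEN subsetD])
  ultimately have "length (remove1 p xs) = 0"
    using assms(3) by linarith
  then show ?thesis
    using assms(2) by (cases xs) (auto split: if_splits)
qed

lemma prefix_sums_le_snoc_iff:
  fixes xs :: "'a::{monoid_add,order} list"
  shows "(\<forall>j. 1 \<le> j \<and> j < length (xs @ [p]) \<longrightarrow> sum_list (take j (xs @ [p])) \<le> (xs @ [p]) ! j)
     \<longleftrightarrow> (\<forall>j. 1 \<le> j \<and> j < length xs \<longrightarrow> sum_list (take j xs) \<le> xs ! j) \<and>
         (xs \<noteq> [] \<longrightarrow> sum_list xs \<le> p)"
  (is "?L \<longleftrightarrow> ?R")
proof
  assume L: ?L
  have "sum_list (take j xs) \<le> xs ! j" if "1 \<le> j" "j < length xs" for j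
    using L[rule_format, of j] that by (simp add: nth_append)
  moreover have "sum_list xs \<le> p" if "xs \<noteq> []"
    using L[rule_format, of "length xs"] that by (simp add: Suc_le_eq)
  ultimately show ?R
    by blast
next
  assume R: ?R
  show ?L
  proof (intro allI impI)
    fix j assume j: "1 \<le> j \<and> j < length (xs @ [p])"
    then consider "j < length xs" | "j = length xs"
      by fastforce
    then show "sum_list (take j (xs @ [p])) \<le> (xs @ [p]) ! j"
      by cases (use R j in \<open>auto simp: nth_append\<close>)
  qed
qed

lemma nonsquashing_distinct_snoc_iff:
  "nonsquashing_distinct n (qs @ [p]) \<longleftrightarrow>
     nonsquashing_distinct (sum_list qs) qs \<and> n = sum_list qs + p \<and> sum_list qs \<le> p \<and>
     1 \<le> p \<and> qs \<noteq> [p]"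
  (is "?L \<longleftrightarrow> ?R")
proof
  assume L: ?L
  then have "sum_list qs \<le> p"
    using prefix_sums_le_snoc_iff[of qs p]
    by (cases "qs = []") (auto simp: nonsquashing_distinct_def)
  with L show ?R
    using prefix_sums_le_snoc_iff[of qs p] by (auto simp: nonsquashing_distinct_def sorted_append)
next
  assume R: ?R
  then have "\<forall>x\<in>set qs. x \<le> p"
    using member_le_sum_list order_trans by blast
  moreover have "p \<notin> set qs"
    using R sum_list_le_member_imp_singleton by (auto simp: nonsquashing_distinct_def)
  ultimately show ?L
    using R prefix_sums_le_snoc_iff[of qs p] by (auto simp: nonsquashing_distinct_def sorted_append)
qed

lemma finite_nonsquashing_distinct: "finite {ps. nonsquashing_distinct n ps}"
proof (rule finite_subset)
  show "{ps. nonsquashing_distinct n ps} \<subseteq> {xs. set xs \<subseteq> {0..n} \<and> length xs \<le> n}"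
    using length_le_sum_list_pos member_le_sum_list by (fastforce simp: nonsquashing_distinct_def)
  show "finite {xs. set xs \<subseteq> {0..n} \<and> length xs \<le> n}"
    by (rule finite_lists_length_le) simp
qed

lemma b_0: "b 0 = 1"
proof -
  have "{ps. nonsquashing_distinct 0 ps} = {[]}"
  proof safe
    fix ps assume "nonsquashing_distinct 0 ps"
    then show "ps = []"
      by (cases ps) (auto simp: nonsquashing_distinct_def)
  qed (simp add: nonsquashing_distinct_def)
  then show ?thesis
    by (simp add: b_def)
qed

lemma nonsquashing_distinct_remove_last_part:
  assumes "n \<ge> 1"
  shows "{ps. nonsquashing_distinct n ps} =
    (\<lambda>qs. qs @ [n - sum_list qs]) `
      ((\<Union>s\<le>n div 2. {qs. nonsquashing_distinct s qs}) - (if even n then {[n div 2]} else {}))"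
    (is "?P = ?f ` (?A - ?bad)")
proof (intro equalityI subsetI)
  fix ps assume "ps \<in> ?P"
  then have ps: "nonsquashing_distinct n ps"
    by simp
  with assms have "ps \<noteq> []"
    by (auto simp: nonsquashing_distinct_def)
  then obtain qs p where qs_p: "ps = qs @ [p]"
    by (metis append_butlast_last_id)
  then have qs: "nonsquashing_distinct (sum_list qs) qs" "n = sum_list qs + p" "sum_list qs \<le> p"
    "qs \<noteq> [p]"
    using ps nonsquashing_distinct_snoc_iff by simp_all
  then have "sum_list qs \<le> n div 2"
    by presburger
  then have "qs \<in> ?A"
    using qs(1) by blast
  moreover have "qs \<notin> ?bad"
  proof
    assume "qs \<in> ?bad"
    then have "even n" and qs_half: "qs = [n div 2]"
      by (auto split: if_splits)
    have "n = n div 2 + p"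
      using qs(2) qs_half by simp
    with \<open>even n\<close> have "p = n div 2"
      by (elim evenE) simp
    then show False
      using qs(4) qs_half by simp
  qed
  moreover have "ps = ?f qs"
    using qs qs_p by simp
  ultimately show "ps \<in> ?f ` (?A - ?bad)"
    by blast
next
  fix ps assume "ps \<in> ?f ` (?A - ?bad)"
  then obtain qs s where ps: "ps = ?f qs" and s: "s \<le> n div 2" "nonsquashing_distinct s qs"
    and good: "qs \<notin> ?bad"
    by auto
  have sum_qs: "sum_list qs = s"
    using s by (simp add: nonsquashing_distinct_def)
  moreover have "qs \<noteq> [n - s]"
  proof
    assume qs_single: "qs = [n - s]"
    then have "n = 2 * s"
      using sum_qs s(1) by simp
    then show False
      using good qs_single by simp
  qed
  ultimately show "ps \<in> ?P"
    using ps s assms nonsquashing_distinct_snoc_iff[of n qs "n - s"] by auto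
qed

lemma sum_b_upto_half:
  assumes "n \<ge> 1"
  shows "(\<Sum>s\<le>n div 2. b s) = b n + (if even n then 1 else 0)"
proof -
  define A where "A = (\<Union>s\<le>n div 2. {qs. nonsquashing_distinct s qs})"
  define bad :: "nat list set" where "bad = (if even n then {[n div 2]} else {})"
  have "finite A"
    unfolding A_def using finite_nonsquashing_distinct by auto
  have "bad \<subseteq> A"
    using assms by (auto simp: A_def bad_def nonsquashing_distinct_def)
  have "card A = (\<Sum>s\<le>n div 2. b s)"
    unfolding A_def b_def
    by (rule card_UN_disjoint) (auto simp: finite_nonsquashing_distinct nonsquashing_distinct_def)
  moreover have "b n = card (A - bad)"
    unfolding b_def nonsquashing_distinct_remove_last_part[OF assms] A_def bad_def
    by (rule card_image) (auto simp: inj_on_def)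
  moreover have "card (A - bad) = card A - card bad"
    using \<open>finite A\<close> \<open>bad \<subseteq> A\<close> by (simp add: card_Diff_subset finite_subset)
  moreover have "card bad \<le> card A"
    using \<open>finite A\<close> \<open>bad \<subseteq> A\<close> by (rule card_mono)
  ultimately show ?thesis
    by (simp add: bad_def)
qed

lemma b_double:
  assumes "m \<ge> 1"
  shows "b (2 * m) = b (2 * m - 1) + b m - 1"
proof -
  have "(2 * m - 1) div 2 = m - 1" "odd (2 * m - 1)"
    using assms by presburger+
  then have "b (2 * m - 1) = (\<Sum>s\<le>m - 1. b s)"
    using sum_b_upto_half[of "2 * m - 1"] assms by simp
  moreover have "(\<Sum>s\<le>m. b s) = (\<Sum>s\<le>m - 1. b s) + b m"
    using assms by (metis Suc_diff_1 less_le_trans sum.atMost_Suc zero_less_one)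
  ultimately show ?thesis
    using sum_b_upto_half[of "2 * m"] assms by simp
qed

lemma b_Suc_double:
  assumes "m \<ge> 1"
  shows "b (2 * m + 1) = b (2 * m) + 1"
  using sum_b_upto_half[of "2 * m"] sum_b_upto_half[of "2 * m + 1"] assms by simp

lemma one_minus_fps_X_mult_nth:
  "((1 - fps_X) * F) $ n = (if n = 0 then F $ 0 else F $ n - F $ (n - 1) :: 'a::comm_ring_1)"
  by (simp add: left_diff_distrib)

lemma fps_compose_X_power_nth:
  fixes F :: "'a::comm_ring_1 fps"
  assumes "k > 0"
  shows "(F oo fps_X ^ k) $ n = (if k dvd n then F $ (n div k) else 0)"
proof -
  have "(F oo fps_X ^ k) $ n = (\<Sum>i=0..n. F $ i * (if n = k * i then 1 else 0))"
    by (simp add: fps_compose_nth power_mult[symmetric])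
  also have "\<dots> = (\<Sum>i=0..n. if i = n div k \<and> k dvd n then F $ i else 0)"
    by (rule sum.cong) (use assms in auto)
  also have "\<dots> = (if k dvd n then F $ (n div k) else 0)"
    using assms by (auto simp: sum.delta' div_le_dividend)
  finally show ?thesis .
qed

lemma fps_compose_X_power_mult_nth_eq_0:
  fixes F :: "'a::comm_ring_1 fps"
  assumes "F $ 0 = 0" "n < k"
  shows "((F oo fps_X ^ k) * G) $ n = 0"
proof -
  have "(F oo fps_X ^ k) $ i = 0" if "i \<le> n" for i
  proof (cases "i = 0")
    case True
    then show ?thesis
      using assms(1) by simp
  next
    case False
    with that assms(2) have "\<not> k dvd i"
      by (auto dest: dvd_imp_le)
    then show ?thesis
      using assms(2) by (simp add: fps_compose_X_power_nth)
  qed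
  then show ?thesis
    by (simp add: fps_mult_nth)
qed

lemma fps_compose_X_power_compose_X_power:
  fixes F :: "'a::idom fps"
  assumes "j > 0" "k > 0"
  shows "(F oo fps_X ^ j) oo fps_X ^ k = F oo fps_X ^ (j * k)"
proof -
  have "F oo (fps_X ^ j oo fps_X ^ k) = (F oo fps_X ^ j) oo fps_X ^ k"
    using assms by (intro fps_compose_assoc) simp_all
  moreover have "fps_X ^ j oo fps_X ^ k = (fps_X ^ (j * k) :: 'a fps)"
    using assms by (simp add: fps_X_power_compose mult.commute flip: power_mult)
  ultimately show ?thesis
    by simp
qed

lemma fps_X_square_divide_one_minus_X_square:
  "fps_X ^ 2 / (1 - fps_X ^ 2) = (Abs_fps (\<lambda>n. if even n \<and> n \<noteq> 0 then 1 else 0) :: 'a::field fps)"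
    (is "_ = ?G")
proof -
  have "?G * (1 - fps_X ^ 2) = fps_X ^ 2"
  proof (rule fps_ext)
    fix n
    show "(?G * (1 - fps_X ^ 2)) $ n = (fps_X ^ 2 :: 'a fps) $ n"
      by (cases n; cases "n - 1") (auto simp: algebra_simps fps_X_power_mult_nth)
  qed
  moreover have "(1 - fps_X ^ 2 :: 'a fps) \<noteq> 0"
    by (auto dest: arg_cong[where f = "\<lambda>F. F $ 0"])
  ultimately show ?thesis
    by (metis nonzero_mult_div_cancel_right)
qed

lemma sums_fps_of_vanishing_remainder:
  fixes F :: "'a::ab_group_add fps"
  assumes "\<And>N. F = (\<Sum>i<N. f i) + R N" and "\<And>N n. n < N \<Longrightarrow> R N $ n = 0"
  shows "f sums F"
  unfolding sums_def
proof (rule tendsto_fpsI)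
  fix n
  show "\<forall>\<^sub>F N in sequentially. (\<Sum>i<N. f i) $ n = F $ n"
    using eventually_gt_at_top[of n]
  proof eventually_elim
    case (elim N)
    have "F $ n = (\<Sum>i<N. f i) $ n + R N $ n"
      by (subst assms(1)[of N]) simp
    with elim show ?case
      using assms(2) by simp
  qed
qed

lemma prod_one_minus_X_power_nth_0:
  assumes "\<forall>j\<in>A. k j > 0"
  shows "(\<Prod>j\<in>A. 1 - fps_X ^ k j :: 'a::comm_ring_1 fps) $ 0 = 1"
  using assms by (induction A rule: infinite_finite_induct) auto

definition B_half_sums :: "real fps" where
  "B_half_sums = Abs_fps (\<lambda>n. real (\<Sum>s\<le>n div 2. b s))"

lemma one_minus_X_mult_B_half_sums: "(1 - fps_X) * B_half_sums = B oo fps_X ^ 2"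
proof (rule fps_ext)
  fix n
  show "((1 - fps_X) * B_half_sums) $ n = (B oo fps_X ^ 2) $ n"
  proof (cases "n = 0")
    case False
    have "(\<Sum>s\<le>n div 2. real (b s)) =
      (\<Sum>s\<le>(n - 1) div 2. real (b s)) + (if even n then real (b (n div 2)) else 0)"
    proof (cases "even n")
      case True
      with False have "n div 2 = Suc ((n - 1) div 2)"
        by presburger
      then show ?thesis
        using True by simp
    next
      case False
      then have "n div 2 = (n - 1) div 2"
        by presburger
      then show ?thesis
        using False by simp
    qed
    then show ?thesis
      using False
      by (simp add: one_minus_fps_X_mult_nth fps_compose_X_power_nth B_half_sums_def B_def)
  qed (simp add: one_minus_fps_X_mult_nth B_half_sums_def B_def)
qed

lemma B_eq_half_sums_minus: "B = B_half_sums - fps_X ^ 2 / (1 - fps_X ^ 2)"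
proof (rule fps_ext)
  fix n
  show "B $ n = (B_half_sums - fps_X ^ 2 / (1 - fps_X ^ 2)) $ n"
  proof (cases "n = 0")
    case False
    then have "real (\<Sum>s\<le>n div 2. b s) = real (b n) + (if even n then 1 else 0)"
      using sum_b_upto_half[of n] by simp
    then show ?thesis
      using False by (simp add: fps_X_square_divide_one_minus_X_square B_half_sums_def B_def)
  qed (simp add: fps_X_square_divide_one_minus_X_square B_half_sums_def B_def)
qed

lemma B_functional_equation:
  "B = (1 / (1 - fps_X)) * (B oo fps_X ^ 2) - fps_X ^ 2 / (1 - fps_X ^ 2)"
proof -
  have "(1 / (1 - fps_X)) * (B oo fps_X ^ 2) = (inverse (1 - fps_X) * (1 - fps_X)) * B_half_sums"
    by (simp add: fps_divide_unit mult.assoc flip: one_minus_X_mult_B_half_sums)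
  also have "\<dots> = B_half_sums"
    by (simp add: inverse_mult_eq_1)
  finally show ?thesis
    using B_eq_half_sums_minus by simp
qed

definition B_multipart :: "real fps" where
  "B_multipart = B - 1 - fps_X / (1 - fps_X)"

lemma B_multipart_nth_0: "B_multipart $ 0 = 0"
  by (simp add: B_multipart_def B_def b_0 fps_divide_unit)

lemma B_multipart_functional_equation:
  "B_multipart = fps_X ^ 3 * inverse (1 - fps_X) * inverse (1 - fps_X ^ 2)
     + (B_multipart oo fps_X ^ 2) * inverse (1 - fps_X)"
proof -
  define inv1 where "inv1 = inverse (1 - fps_X :: real fps)"
  define inv2 where "inv2 = inverse (1 - fps_X ^ 2 :: real fps)"
  have inv1: "inv1 * (1 - fps_X) = 1" and inv2: "inv2 * (1 - fps_X ^ 2) = 1"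
    unfolding inv1_def inv2_def by (simp_all add: inverse_mult_eq_1)
  have "fps_X * inv1 oo fps_X ^ 2 = fps_X ^ 2 * inv2"
    unfolding inv1_def inv2_def
    by (simp add: fps_compose_mult_distrib fps_inverse_compose fps_compose_sub_distrib)
  then have "B_multipart oo fps_X ^ 2 = (B oo fps_X ^ 2) - 1 - fps_X ^ 2 * inv2"
    by (simp add: B_multipart_def fps_divide_unit fps_compose_sub_distrib flip: inv1_def)
  moreover have "B_multipart = inv1 * (B oo fps_X ^ 2) - fps_X ^ 2 * inv2 - 1 - fps_X * inv1"
    using B_functional_equation
    by (simp add: B_multipart_def fps_divide_unit flip: inv1_def inv2_def)
  ultimately show ?thesis
    unfolding inv1_def [symmetric] inv2_def [symmetric] using inv1 inv2 by algebra
qed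

lemma B_multipart_compose_X_power:
  assumes "m > 0"
  shows "B_multipart oo fps_X ^ m =
    fps_X ^ (3 * m) * inverse (1 - fps_X ^ m) * inverse (1 - fps_X ^ (2 * m))
      + (B_multipart oo fps_X ^ (2 * m)) * inverse (1 - fps_X ^ m)"
proof -
  have X0: "(fps_X ^ m :: real fps) $ 0 = 0"
    using assms by simp
  have "B_multipart oo fps_X ^ m =
    (fps_X ^ 3 * inverse (1 - fps_X) * inverse (1 - fps_X ^ 2)
      + (B_multipart oo fps_X ^ 2) * inverse (1 - fps_X)) oo fps_X ^ m"
    by (rule arg_cong[where f = "\<lambda>F. F oo fps_X ^ m", OF B_multipart_functional_equation])
  also have "\<dots> = (fps_X ^ 3 oo fps_X ^ m) * inverse (1 - fps_X oo fps_X ^ m)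
      * inverse (1 - fps_X ^ 2 oo fps_X ^ m)
      + (B_multipart oo fps_X ^ 2 oo fps_X ^ m) * inverse (1 - fps_X oo fps_X ^ m)"
    by (simp add: fps_compose_mult_distrib[OF X0] fps_compose_add_distrib fps_inverse_compose[OF X0])
  also have "\<dots> = fps_X ^ (3 * m) * inverse (1 - fps_X ^ m) * inverse (1 - fps_X ^ (2 * m))
      + (B_multipart oo fps_X ^ (2 * m)) * inverse (1 - fps_X ^ m)"
    using assms X0
    by (simp add: fps_compose_sub_distrib fps_X_power_compose fps_compose_X_power_compose_X_power
        mult.commute flip: power_mult)
  finally show ?thesis .
qed

lemma B_multipart_partial_sums:
  "B_multipart = (\<Sum>i<N. fps_X ^ (3 * 2 ^ i) / (\<Prod>j\<le>Suc i. 1 - fps_X ^ 2 ^ j))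
     + (B_multipart oo fps_X ^ 2 ^ N) * inverse (\<Prod>j<N. 1 - fps_X ^ 2 ^ j)"
proof (induction N)
  case (Suc N)
  have "(B_multipart oo fps_X ^ 2 ^ N) * inverse (\<Prod>j<N. 1 - fps_X ^ 2 ^ j) =
    fps_X ^ (3 * 2 ^ N) / (\<Prod>j\<le>Suc N. 1 - fps_X ^ 2 ^ j)
      + (B_multipart oo fps_X ^ 2 ^ Suc N) * inverse (\<Prod>j<Suc N. 1 - fps_X ^ 2 ^ j)"
    by (subst B_multipart_compose_X_power)
      (simp_all add: fps_divide_unit prod_one_minus_X_power_nth_0 fps_inverse_mult
        distrib_left distrib_right mult_ac flip: lessThan_Suc_atMost)
  then show ?case
    using Suc.IH by (simp add: add.assoc)
qed simp

lemma B_multipart_sums: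
  "(\<lambda>i. fps_X ^ (3 * 2 ^ i) / (\<Prod>j\<le>Suc i. 1 - fps_X ^ 2 ^ j)) sums B_multipart"
proof (rule sums_fps_of_vanishing_remainder[OF B_multipart_partial_sums])
  fix N n :: nat
  assume "n < N"
  also have "N < 2 ^ N"
    by (rule less_exp)
  finally show "((B_multipart oo fps_X ^ 2 ^ N) * inverse (\<Prod>j<N. 1 - fps_X ^ 2 ^ j)) $ n = 0"
    by (intro fps_compose_X_power_mult_nth_eq_0 B_multipart_nth_0)
qed

theorem theorem2:
  shows "b 0 = 1 \<and> b 1 = 1 \<and>
    (\<forall>m\<ge>1. b (2*m) = b (2*m - 1) + b m - 1 \<and> b (2*m + 1) = b (2*m) + 1) \<and>
    B = (1 / (1 - fps_X)) * (B oo fps_X ^ 2) - fps_X ^ 2 / (1 - fps_X ^ 2) \<and>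
    (\<exists>S. (\<lambda>i. fps_X ^ (3 * 2 ^ (Suc i - 1)) / (\<Prod>j = 0..Suc i. (1 - fps_X ^ (2 ^ j))) :: real fps)
            sums S \<and>
         B = 1 + fps_X / (1 - fps_X) + S)"
proof -
  have "b 1 = 1"
    using sum_b_upto_half[of 1] b_0 by simp
  moreover have "B = 1 + fps_X / (1 - fps_X) + B_multipart"
    by (simp add: B_multipart_def)
  ultimately show ?thesis
    using b_0 b_double b_Suc_double B_functional_equation B_multipart_sums
    by (auto simp: atLeast0AtMost)
qed

end
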